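(* Let $\mathbb S$ be the free semigroup action on the compact metric space $X$ generated by continuous maps $g_1,\dots,g_p$, and let $K\subset X$ be closed. (i) If $h_{top}(K,\mathbb S)>0$, then $K\cap E_p(X,\mathbb S)\neq\emptyset$. (ii) If $h_{top}(K,\mathbb S)=h_{top}(X,\mathbb S)$, then $K\cap E^f_p(X,\mathbb S)\neq\emptyset$.
   Context: Setting: $(X,d)$ compact metric space, $g_1,\dots,g_p:X\to X$ continuous; $G_n^*$ the set of words $\underline g=g_{i_n}\cdots g_{i_1}$, $i_j\in\{1,\dots,p\}$; $d_{\underline g}(x,y)=\max_{0\le j\le n}d(g_{i_j}\cdots g_{i_1}x,g_{i_j}\cdots g_{i_1}y)$; $s(K,\underline g,\varepsilon)$ the maximal cardinality of a $(\underline g,\varepsilon)$-separated subset of $K$; $h_{top}(K,\mathbb S)=\lim_{\varepsilon\to0}\limsup_n\frac1n\log\big(p^{-n}\sum_{\underline g\in G_n^*}s(K,\underline g,\varepsilon)\big)$. $E_p(X,\mathbb S)$: points $x_0$ with $h_{top}(N,\mathbb S)>0$ for every closed neighbourhood $N$ of $x_0$. $E^f_p(X,\mathbb S)$: points $x_0$ with $h_{top}(N,\mathbb S)=h_{top}(X,\mathbb S)$ for every closed neighbourhood $N$ of $x_0$. *)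

theory Defs
  imports "HOL-Analysis.Analysis"
begin

text \<open>Generators are g 0, ..., g (p-1). A word i_1 ... i_n (applied i_1 first)
  is the list [i_1, ..., i_n].\<close>

definition words :: "nat \<Rightarrow> nat \<Rightarrow> nat list set" where
  "words p n = {w. length w = n \<and> set w \<subseteq> {0..<p}}"

definition word_orbit :: "(nat \<Rightarrow> 'a \<Rightarrow> 'a) \<Rightarrow> nat list \<Rightarrow> nat \<Rightarrow> 'a \<Rightarrow> 'a" where
  "word_orbit g w j x = fold g (take j w) x"

definition word_dist :: "(nat \<Rightarrow> 'a::metric_space \<Rightarrow> 'a) \<Rightarrow> nat list \<Rightarrow> 'a \<Rightarrow> 'a \<Rightarrow> real" where
  "word_dist g w x y =
     Max ((\<lambda>j. dist (word_orbit g w j x) (word_orbit g w j y)) ` {0..length w})"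

definition word_separated ::
  "(nat \<Rightarrow> 'a::metric_space \<Rightarrow> 'a) \<Rightarrow> nat list \<Rightarrow> real \<Rightarrow> 'a set \<Rightarrow> bool" where
  "word_separated g w \<epsilon> E \<longleftrightarrow> (\<forall>x\<in>E. \<forall>y\<in>E. x \<noteq> y \<longrightarrow> word_dist g w x y > \<epsilon>)"

definition sep_card ::
  "(nat \<Rightarrow> 'a::metric_space \<Rightarrow> 'a) \<Rightarrow> 'a set \<Rightarrow> nat list \<Rightarrow> real \<Rightarrow> nat" where
  "sep_card g K w \<epsilon> = Sup {card E | E. finite E \<and> E \<subseteq> K \<and> word_separated g w \<epsilon> E}"

definition eln :: "real \<Rightarrow> ereal" where
  "eln x = (if x > 0 then ereal (ln x) else -\<infinity>)"

definition top_entropy ::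
  "(nat \<Rightarrow> 'a::metric_space \<Rightarrow> 'a) \<Rightarrow> nat \<Rightarrow> 'a set \<Rightarrow> ereal" where
  "top_entropy g p K =
     Lim (at_right (0::real))
       (\<lambda>\<epsilon>. limsup (\<lambda>n. ereal (1 / real n) *
          eln (inverse (real p ^ n) * (\<Sum>w\<in>words p n. real (sep_card g K w \<epsilon>)))))"

definition closed_nbhd :: "'a::metric_space set \<Rightarrow> 'a \<Rightarrow> 'a set \<Rightarrow> bool" where
  "closed_nbhd X x0 N \<longleftrightarrow> closed N \<and> N \<subseteq> X \<and> (\<exists>e>0. X \<inter> ball x0 e \<subseteq> N)"

definition entropy_points ::
  "'a::metric_space set \<Rightarrow> (nat \<Rightarrow> 'a \<Rightarrow> 'a) \<Rightarrow> nat \<Rightarrow> 'a set" where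
  "entropy_points X g p =
     {x0 \<in> X. \<forall>N. closed_nbhd X x0 N \<longrightarrow> top_entropy g p N > 0}"

definition full_entropy_points ::
  "'a::metric_space set \<Rightarrow> (nat \<Rightarrow> 'a \<Rightarrow> 'a) \<Rightarrow> nat \<Rightarrow> 'a set" where
  "full_entropy_points X g p =
     {x0 \<in> X. \<forall>N. closed_nbhd X x0 N \<longrightarrow> top_entropy g p N = top_entropy g p X}"

end

theory Submission
  imports Defs
begin

text \<open>Topological entropy behaves like a maximum under finite unions: the number of
  separated points of \<open>A \<union> B\<close> is at most the sum of those of \<open>A\<close> and \<open>B\<close>, which costs
  only \<open>ln 2 / n\<close> in the exponential growth rate. Hence \<open>h(A \<union> B) \<le> max (h A) (h B)\<close>,
  and entropy is monotone in the set. If no point of the compact set \<open>K\<close> were an entropy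
  point (resp. a full entropy point), every point of \<open>K\<close> would have a closed neighbourhood of
  entropy \<open>\<le> 0\<close> (resp. \<open>< h X\<close>); finitely many of them cover \<open>K\<close>, so \<open>h K\<close> would be bounded
  by the entropy of one of them, a contradiction.\<close>

subsection \<open>Growth rates in the extended reals\<close>

lemma eln_mono: "x \<le> y \<Longrightarrow> eln x \<le> eln y"
  unfolding eln_def by auto

lemma scaled_eln_pos: "n \<ge> 1 \<Longrightarrow> x > 0 \<Longrightarrow> ereal (1 / real n) * eln x = ereal (ln x / real n)"
  unfolding eln_def by simp

lemma scaled_eln_nonpos: "n \<ge> 1 \<Longrightarrow> x \<le> 0 \<Longrightarrow> ereal (1 / real n) * eln x = -\<infinity>"
  unfolding eln_def by simp

lemma scaled_eln_add_le:
  fixes x a b :: real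
  assumes n: "n \<ge> 1" and le: "x \<le> a + b" and "0 \<le> a" "0 \<le> b"
  shows "ereal (1 / real n) * eln x \<le>
    ereal (ln 2 / real n) + max (ereal (1 / real n) * eln a) (ereal (1 / real n) * eln b)"
proof (cases "x \<le> 0")
  case True
  then show ?thesis using scaled_eln_nonpos[OF n True] by simp
next
  case False
  define m where "m = max a b"
  have m: "m > 0" using False le unfolding m_def by linarith
  have "ln x \<le> ln (2 * m)" using False le unfolding m_def by (subst ln_le_cancel_iff) auto
  also have "\<dots> = ln 2 + ln m" using m by (simp add: ln_mult)
  finally have "ln x / real n \<le> ln 2 / real n + ln m / real n"
    using n by (simp add: divide_right_mono add_divide_distrib[symmetric])
  then have "ereal (1 / real n) * eln x \<le> ereal (ln 2 / real n) + ereal (1 / real n) * eln m"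
    using scaled_eln_pos[OF n] False m by simp
  moreover have "ereal (1 / real n) * eln m \<le>
      max (ereal (1 / real n) * eln a) (ereal (1 / real n) * eln b)"
    unfolding m_def by (cases "b \<le> a") (auto simp: max_def)
  ultimately show ?thesis by (meson add_left_mono order.trans)
qed

lemma limsup_max_le:
  fixes u v :: "nat \<Rightarrow> ereal"
  shows "limsup (\<lambda>n. max (u n) (v n)) \<le> max (limsup u) (limsup v)"
proof (rule dense_ge)
  fix y assume "max (limsup u) (limsup v) < y"
  then have "eventually (\<lambda>n. u n < y) sequentially" "eventually (\<lambda>n. v n < y) sequentially"
    by (auto intro: Limsup_lessD)
  then have "eventually (\<lambda>n. max (u n) (v n) \<le> y) sequentially"
    by eventually_elim auto
  then show "limsup (\<lambda>n. max (u n) (v n)) \<le> y" by (rule Limsup_bounded)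
qed

lemma limsup_const_over_n: "limsup (\<lambda>n. ereal (c / real n)) = 0"
proof -
  have "(\<lambda>n. ereal (c / real n)) \<longlonglongrightarrow> ereal 0"
    by (intro tendsto_ereal lim_const_over_n)
  then show ?thesis by (simp add: lim_imp_Limsup zero_ereal_def)
qed

lemma Lim_at_right_0_antimono:
  fixes F :: "real \<Rightarrow> ereal"
  assumes "\<And>a b. 0 < a \<Longrightarrow> a \<le> b \<Longrightarrow> F b \<le> F a"
  shows "Lim (at_right 0) F = (SUP e\<in>{0<..}. F e)"
proof (rule tendsto_Lim)
  show "\<not> trivial_limit (at_right (0::real))" by simp
  show "(F \<longlongrightarrow> (SUP e\<in>{0<..}. F e)) (at_right 0)"
  proof (rule order_tendstoI)
    fix y assume "y < (SUP e\<in>{0<..}. F e)"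
    then obtain e where e: "e > 0" "y < F e" by (auto simp: less_SUP_iff)
    show "eventually (\<lambda>x. y < F x) (at_right 0)"
      unfolding eventually_at_right_field
      using e assms by (intro exI[of _ e]) (auto intro: less_le_trans)
  next
    fix y assume "(SUP e\<in>{0<..}. F e) < y"
    then have "\<And>x. x > 0 \<Longrightarrow> F x < y"
      by (meson SUP_upper greaterThan_iff le_less_trans)
    then show "eventually (\<lambda>x. F x < y) (at_right 0)"
      using eventually_at_right_less[of 0] by (auto elim: eventually_mono)
  qed
qed

subsection \<open>Words and separated sets\<close>

lemma card_words: "card (words p n) = p ^ n"
  using card_lists_length_eq[OF finite_atLeastLessThan, of 0 p n]
  unfolding words_def by (simp add: conj_commute)

lemma set_word_subset: "w \<in> words p n \<Longrightarrow> set w \<subseteq> {0..<p}"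
  by (simp add: words_def)

lemma word_dist_less_iff:
  "word_dist g w x y < e \<longleftrightarrow> (\<forall>j\<le>length w. dist (word_orbit g w j x) (word_orbit g w j y) < e)"
  unfolding word_dist_def by (subst Max_less_iff) auto

lemma word_separated_subset: "word_separated g w \<epsilon> E \<Longrightarrow> F \<subseteq> E \<Longrightarrow> word_separated g w \<epsilon> F"
  unfolding word_separated_def by auto

lemma word_separated_anti: "word_separated g w \<epsilon>' E \<Longrightarrow> \<epsilon> \<le> \<epsilon>' \<Longrightarrow> word_separated g w \<epsilon> E"
  unfolding word_separated_def by (auto intro: le_less_trans)

lemma word_separated_singleton: "word_separated g w \<epsilon> {x}"
  unfolding word_separated_def by simp

lemma sep_card_least:
  assumes "\<And>E. finite E \<Longrightarrow> E \<subseteq> A \<Longrightarrow> word_separated g w \<epsilon> E \<Longrightarrow> card E \<le> z"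
  shows "sep_card g A w \<epsilon> \<le> z"
proof -
  have "card {} \<in> {card E | E. finite E \<and> E \<subseteq> A \<and> word_separated g w \<epsilon> E}"
    unfolding word_separated_def by (intro CollectI exI[of _ "{}"]) simp
  then show ?thesis unfolding sep_card_def by (intro cSup_least) (use assms in auto)
qed

lemma sep_card_empty: "sep_card g {} w \<epsilon> = 0"
  using sep_card_least[of "{}" g w \<epsilon> 0] by simp

subsection \<open>Entropy of subsets under a free semigroup action\<close>

definition sep_average :: "(nat \<Rightarrow> 'a::metric_space \<Rightarrow> 'a) \<Rightarrow> nat \<Rightarrow> 'a set \<Rightarrow> nat \<Rightarrow> real \<Rightarrow> real"
  where "sep_average g p A n \<epsilon> = inverse (real p ^ n) * (\<Sum>w\<in>words p n. real (sep_card g A w \<epsilon>))"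

definition sep_growth :: "(nat \<Rightarrow> 'a::metric_space \<Rightarrow> 'a) \<Rightarrow> nat \<Rightarrow> 'a set \<Rightarrow> real \<Rightarrow> nat \<Rightarrow> ereal"
  where "sep_growth g p A \<epsilon> n = ereal (1 / real n) * eln (sep_average g p A n \<epsilon>)"

definition scale_entropy :: "(nat \<Rightarrow> 'a::metric_space \<Rightarrow> 'a) \<Rightarrow> nat \<Rightarrow> 'a set \<Rightarrow> real \<Rightarrow> ereal"
  where "scale_entropy g p A \<epsilon> = limsup (sep_growth g p A \<epsilon>)"

lemma top_entropy_Lim_scale_entropy: "top_entropy g p A = Lim (at_right 0) (scale_entropy g p A)"
  unfolding top_entropy_def scale_entropy_def sep_growth_def sep_average_def ..

lemma sep_average_nonneg: "0 \<le> sep_average g p A n \<epsilon>"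
  unfolding sep_average_def by (intro mult_nonneg_nonneg sum_nonneg) auto

lemma sep_average_empty: "sep_average g p {} n \<epsilon> = 0"
  unfolding sep_average_def by (simp add: sep_card_empty)

locale free_semigroup_action =
  fixes X :: "'a::metric_space set" and g :: "nat \<Rightarrow> 'a \<Rightarrow> 'a" and p :: nat
  assumes compact: "compact X" and generators: "p \<ge> 1"
    and continuous: "\<And>i. i < p \<Longrightarrow> continuous_on X (g i)"
    and maps_into: "\<And>i. i < p \<Longrightarrow> g i ` X \<subseteq> X"
begin

lemma continuous_on_fold:
  "set l \<subseteq> {0..<p} \<Longrightarrow> continuous_on X (fold g l) \<and> fold g l ` X \<subseteq> X"
proof (induction l)
  case Nil
  then show ?case by simp
next
  case (Cons a l)
  then have a: "a < p" and IH: "continuous_on X (fold g l)" "fold g l ` X \<subseteq> X" by auto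
  have "continuous_on X (fold g l \<circ> g a)"
    by (rule continuous_on_compose[OF continuous[OF a]])
      (rule continuous_on_subset[OF IH(1) maps_into[OF a]])
  moreover have "(fold g l \<circ> g a) ` X \<subseteq> X"
    using IH(2) maps_into[OF a] by (auto simp: image_subset_iff)
  ultimately show ?case by simp
qed

lemma continuous_on_word_orbit: "set w \<subseteq> {0..<p} \<Longrightarrow> continuous_on X (word_orbit g w j)"
proof -
  assume w: "set w \<subseteq> {0..<p}"
  have "word_orbit g w j = fold g (take j w)" by (rule ext) (simp add: word_orbit_def)
  moreover have "set (take j w) \<subseteq> {0..<p}" using set_take_subset[of j w] w by (rule order_trans)
  ultimately show ?thesis using continuous_on_fold by auto
qed

lemma word_orbit_uniformly_close:
  assumes w: "set w \<subseteq> {0..<p}" and x: "x \<in> X" and e: "e > 0"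
  shows "\<exists>d>0. \<forall>y\<in>X. dist y x < d \<longrightarrow>
           (\<forall>j\<le>length w. dist (word_orbit g w j y) (word_orbit g w j x) < e)"
proof -
  have "\<forall>j\<in>{..length w}. eventually (\<lambda>y. dist (word_orbit g w j y) (word_orbit g w j x) < e)
          (at x within X)"
    using continuous_on_word_orbit[OF w] x e by (auto simp: continuous_on_def intro: tendstoD)
  then have "eventually (\<lambda>y. \<forall>j\<in>{..length w}. dist (word_orbit g w j y) (word_orbit g w j x) < e)
      (at x within X)"
    by (intro eventually_ball_finite) auto
  then obtain d where "d > 0" "\<forall>y\<in>X. y \<noteq> x \<and> dist y x < d \<longrightarrow>
      (\<forall>j\<le>length w. dist (word_orbit g w j y) (word_orbit g w j x) < e)"
    by (auto simp: eventually_at)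
  then show ?thesis using e by (intro exI[of _ d]) auto
qed

text \<open>Points of a separated set lie in distinct balls of a finite cover of \<open>X\<close>
  by balls of diameter less than the separation in the word metric.\<close>
lemma separated_sets_bounded:
  assumes w: "set w \<subseteq> {0..<p}" and e: "\<epsilon> > 0"
  obtains M where "\<And>E. E \<subseteq> X \<Longrightarrow> word_separated g w \<epsilon> E \<Longrightarrow> finite E \<and> card E \<le> M"
proof -
  obtain d where d: "\<And>x. x \<in> X \<Longrightarrow> d x > 0"
    "\<And>x y j. x \<in> X \<Longrightarrow> y \<in> X \<Longrightarrow> dist y x < d x \<Longrightarrow> j \<le> length w \<Longrightarrow>
        dist (word_orbit g w j y) (word_orbit g w j x) < \<epsilon>/2"
  proof -
    have "\<forall>x\<in>X. \<exists>d>0. \<forall>y\<in>X. dist y x < d \<longrightarrow>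
        (\<forall>j\<le>length w. dist (word_orbit g w j y) (word_orbit g w j x) < \<epsilon>/2)"
      using word_orbit_uniformly_close[OF w _ half_gt_zero[OF e]] by blast
    then show ?thesis using that by (metis bchoice)
  qed
  have "X \<subseteq> (\<Union>x\<in>X. ball x (d x))" using d(1) by auto
  then obtain C where C: "C \<subseteq> X" "finite C" "X \<subseteq> (\<Union>x\<in>C. ball x (d x))"
    using compactE_image[OF compact, of X "\<lambda>x. ball x (d x)"] by auto
  show ?thesis
  proof
    fix E assume E: "E \<subseteq> X" and sep: "word_separated g w \<epsilon> E"
    obtain c where c: "\<And>e. e \<in> E \<Longrightarrow> c e \<in> C \<and> e \<in> ball (c e) (d (c e))"
      using bchoice[of E "\<lambda>e c. c \<in> C \<and> e \<in> ball c (d c)"] E C(3) by blast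
    have "inj_on c E"
    proof (rule inj_onI)
      fix e1 e2 assume e12: "e1 \<in> E" "e2 \<in> E" "c e1 = c e2"
      have "word_dist g w e1 e2 < \<epsilon>"
        unfolding word_dist_less_iff
      proof (intro allI impI)
        fix j assume j: "j \<le> length w"
        have "c e1 \<in> X" "dist e1 (c e1) < d (c e1)" "dist e2 (c e1) < d (c e1)"
          using c[OF e12(1)] c[OF e12(2)] e12(3) C(1) by (auto simp: dist_commute)
        then have "dist (word_orbit g w j e1) (word_orbit g w j (c e1)) < \<epsilon>/2"
             "dist (word_orbit g w j e2) (word_orbit g w j (c e1)) < \<epsilon>/2"
          using d(2)[OF _ _ _ j] e12(1,2) E by auto
        then show "dist (word_orbit g w j e1) (word_orbit g w j e2) < \<epsilon>"
          using dist_triangle_half_l by blast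
      qed
      then show "e1 = e2" using sep e12 unfolding word_separated_def by force
    qed
    moreover have "c ` E \<subseteq> C" using c by auto
    ultimately show "finite E \<and> card E \<le> card C"
      using C(2) by (meson card_inj_on_le finite_imageD finite_subset)
  qed
qed

lemma card_le_sep_card:
  assumes "A \<subseteq> X" "\<epsilon> > 0" "set w \<subseteq> {0..<p}" "finite E" "E \<subseteq> A" "word_separated g w \<epsilon> E"
  shows "card E \<le> sep_card g A w \<epsilon>"
proof -
  obtain M where M: "\<And>E. E \<subseteq> X \<Longrightarrow> word_separated g w \<epsilon> E \<Longrightarrow> finite E \<and> card E \<le> M"
    using separated_sets_bounded[OF assms(3,2)] by blast
  have "bdd_above {card E | E. finite E \<and> E \<subseteq> A \<and> word_separated g w \<epsilon> E}"
    using M assms(1) by (intro bdd_aboveI[of _ M]) auto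
  then show ?thesis unfolding sep_card_def by (intro cSup_upper) (use assms in auto)
qed

lemma sep_card_mono:
  assumes "A \<subseteq> B" "B \<subseteq> X" "\<epsilon> > 0" "set w \<subseteq> {0..<p}"
  shows "sep_card g A w \<epsilon> \<le> sep_card g B w \<epsilon>"
  by (rule sep_card_least, rule card_le_sep_card) (use assms in auto)

lemma sep_card_antimono_scale:
  assumes "A \<subseteq> X" "0 < \<epsilon>" "\<epsilon> \<le> \<epsilon>'" "set w \<subseteq> {0..<p}"
  shows "sep_card g A w \<epsilon>' \<le> sep_card g A w \<epsilon>"
  by (rule sep_card_least, rule card_le_sep_card) (use assms word_separated_anti in auto)

lemma sep_card_Un_le:
  assumes "A \<subseteq> X" "B \<subseteq> X" "\<epsilon> > 0" "set w \<subseteq> {0..<p}"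
  shows "sep_card g (A \<union> B) w \<epsilon> \<le> sep_card g A w \<epsilon> + sep_card g B w \<epsilon>"
proof (rule sep_card_least)
  fix E assume E: "finite E" "E \<subseteq> A \<union> B" "word_separated g w \<epsilon> E"
  have "E = (E \<inter> A) \<union> (E \<inter> B)" using E by auto
  then have "card E \<le> card (E \<inter> A) + card (E \<inter> B)" by (metis card_Un_le)
  also have "card (E \<inter> A) \<le> sep_card g A w \<epsilon>"
    by (rule card_le_sep_card) (use assms E word_separated_subset[OF E(3)] in auto)
  also have "card (E \<inter> B) \<le> sep_card g B w \<epsilon>"
    by (rule card_le_sep_card) (use assms E word_separated_subset[OF E(3)] in auto)
  finally show "card E \<le> sep_card g A w \<epsilon> + sep_card g B w \<epsilon>" by simp
qed

lemma sep_average_mono: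
  assumes "A \<subseteq> B" "B \<subseteq> X" "\<epsilon> > 0"
  shows "sep_average g p A n \<epsilon> \<le> sep_average g p B n \<epsilon>"
  unfolding sep_average_def
  by (intro mult_left_mono sum_mono) (use assms sep_card_mono set_word_subset in auto)

lemma sep_average_antimono_scale:
  assumes "A \<subseteq> X" "0 < \<epsilon>" "\<epsilon> \<le> \<epsilon>'"
  shows "sep_average g p A n \<epsilon>' \<le> sep_average g p A n \<epsilon>"
  unfolding sep_average_def
  by (intro mult_left_mono sum_mono) (use assms sep_card_antimono_scale set_word_subset in auto)

lemma sep_average_Un_le:
  assumes "A \<subseteq> X" "B \<subseteq> X" "\<epsilon> > 0"
  shows "sep_average g p (A \<union> B) n \<epsilon> \<le> sep_average g p A n \<epsilon> + sep_average g p B n \<epsilon>"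
proof -
  have "(\<Sum>w\<in>words p n. real (sep_card g (A \<union> B) w \<epsilon>)) \<le>
        (\<Sum>w\<in>words p n. real (sep_card g A w \<epsilon>) + real (sep_card g B w \<epsilon>))"
  proof (rule sum_mono)
    fix w assume "w \<in> words p n"
    then have "sep_card g (A \<union> B) w \<epsilon> \<le> sep_card g A w \<epsilon> + sep_card g B w \<epsilon>"
      using sep_card_Un_le[OF assms] set_word_subset by blast
    then show "real (sep_card g (A \<union> B) w \<epsilon>) \<le> real (sep_card g A w \<epsilon>) + real (sep_card g B w \<epsilon>)"
      by linarith
  qed
  then show ?thesis unfolding sep_average_def sum.distrib distrib_left[symmetric]
    by (intro mult_left_mono) auto
qed

lemma sep_average_ge_1:
  assumes "A \<noteq> {}" "A \<subseteq> X" "\<epsilon> > 0"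
  shows "1 \<le> sep_average g p A n \<epsilon>"
proof -
  obtain x where x: "x \<in> A" using assms by auto
  have "real p ^ n = (\<Sum>w\<in>words p n. 1)" by (simp add: card_words)
  also have "\<dots> \<le> (\<Sum>w\<in>words p n. real (sep_card g A w \<epsilon>))"
    using card_le_sep_card[OF assms(2,3) _ _ _ word_separated_singleton, of _ x] x set_word_subset
    by (intro sum_mono) fastforce
  finally show ?thesis unfolding sep_average_def using generators by (simp add: field_simps)
qed

lemma scale_entropy_mono:
  assumes "A \<subseteq> B" "B \<subseteq> X" "\<epsilon> > 0"
  shows "scale_entropy g p A \<epsilon> \<le> scale_entropy g p B \<epsilon>"
  unfolding scale_entropy_def sep_growth_def
  by (intro Limsup_mono always_eventually allI ereal_mult_left_mono eln_mono
      sep_average_mono assms) auto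

lemma scale_entropy_antimono:
  assumes "A \<subseteq> X" "0 < \<epsilon>" "\<epsilon> \<le> \<epsilon>'"
  shows "scale_entropy g p A \<epsilon>' \<le> scale_entropy g p A \<epsilon>"
  unfolding scale_entropy_def sep_growth_def
  by (intro Limsup_mono always_eventually allI ereal_mult_left_mono eln_mono
      sep_average_antimono_scale assms) auto

lemma scale_entropy_Un_le:
  assumes "A \<subseteq> X" "B \<subseteq> X" "\<epsilon> > 0"
  shows "scale_entropy g p (A \<union> B) \<epsilon> \<le> max (scale_entropy g p A \<epsilon>) (scale_entropy g p B \<epsilon>)"
proof -
  let ?u = "sep_growth g p A \<epsilon>" and ?v = "sep_growth g p B \<epsilon>"
  have "scale_entropy g p (A \<union> B) \<epsilon> \<le> limsup (\<lambda>n. ereal (ln 2 / real n) + max (?u n) (?v n))"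
    unfolding scale_entropy_def sep_growth_def
    using scaled_eln_add_le[OF _ sep_average_Un_le[OF assms] sep_average_nonneg sep_average_nonneg]
    by (intro Limsup_mono eventually_sequentiallyI) auto
  also have "\<dots> \<le> limsup (\<lambda>n. ereal (ln 2 / real n)) + limsup (\<lambda>n. max (?u n) (?v n))"
    by (rule ereal_limsup_add_mono)
  also have "\<dots> \<le> max (scale_entropy g p A \<epsilon>) (scale_entropy g p B \<epsilon>)"
    unfolding limsup_const_over_n scale_entropy_def using limsup_max_le by simp
  finally show ?thesis .
qed

lemma scale_entropy_empty: "scale_entropy g p {} \<epsilon> = -\<infinity>"
proof -
  have "scale_entropy g p {} \<epsilon> \<le> -\<infinity>"
    unfolding scale_entropy_def sep_growth_def sep_average_empty
    using scaled_eln_nonpos[of _ 0] by (intro Limsup_bounded eventually_sequentiallyI) auto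
  then show ?thesis by simp
qed

lemma scale_entropy_nonneg:
  assumes "A \<noteq> {}" "A \<subseteq> X" "\<epsilon> > 0"
  shows "0 \<le> scale_entropy g p A \<epsilon>"
  unfolding scale_entropy_def
proof (intro le_Limsup eventually_sequentiallyI)
  fix n :: nat assume n: "n \<ge> 1"
  have "1 \<le> sep_average g p A n \<epsilon>" using sep_average_ge_1[OF assms] .
  then show "0 \<le> sep_growth g p A \<epsilon> n" unfolding sep_growth_def using scaled_eln_pos[OF n] by simp
qed simp

lemma top_entropy_eq_SUP:
  assumes "A \<subseteq> X"
  shows "top_entropy g p A = (SUP \<epsilon>\<in>{0<..}. scale_entropy g p A \<epsilon>)"
  unfolding top_entropy_Lim_scale_entropy
  by (rule Lim_at_right_0_antimono) (use scale_entropy_antimono assms in auto)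

lemma top_entropy_mono:
  assumes "A \<subseteq> B" "B \<subseteq> X"
  shows "top_entropy g p A \<le> top_entropy g p B"
  unfolding top_entropy_eq_SUP[OF assms(2)] top_entropy_eq_SUP[OF order_trans[OF assms]]
  by (rule SUP_mono) (use scale_entropy_mono assms in auto)

lemma top_entropy_Un_le:
  assumes "A \<subseteq> X" "B \<subseteq> X"
  shows "top_entropy g p (A \<union> B) \<le> max (top_entropy g p A) (top_entropy g p B)"
proof -
  have "scale_entropy g p S \<epsilon> \<le> top_entropy g p S" if "S \<subseteq> X" "\<epsilon> > 0" for S \<epsilon>
    unfolding top_entropy_eq_SUP[OF that(1)] using that(2) by (auto intro: SUP_upper)
  then have "scale_entropy g p (A \<union> B) \<epsilon> \<le> max (top_entropy g p A) (top_entropy g p B)"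
    if "\<epsilon> > 0" for \<epsilon>
    using scale_entropy_Un_le[OF assms that] assms that
    by (meson max.mono order_trans)
  then show ?thesis unfolding top_entropy_eq_SUP[OF Un_least[OF assms]] by (auto intro: SUP_least)
qed

lemma top_entropy_empty: "top_entropy g p {} = -\<infinity>"
  unfolding top_entropy_eq_SUP[OF empty_subsetI] scale_entropy_empty by simp

lemma top_entropy_nonneg:
  assumes "A \<noteq> {}" "A \<subseteq> X"
  shows "0 \<le> top_entropy g p A"
  unfolding top_entropy_eq_SUP[OF assms(2)]
  using scale_entropy_nonneg[OF assms, of 1] by (auto intro: SUP_upper2[of 1])

lemma top_entropy_UN_le_Max:
  assumes "finite C" "C \<noteq> {}" "\<And>c. c \<in> C \<Longrightarrow> N c \<subseteq> X"
  shows "top_entropy g p (\<Union>c\<in>C. N c) \<le> Max ((\<lambda>c. top_entropy g p (N c)) ` C)"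
  using assms
proof (induction C rule: finite_ne_induct)
  case (singleton x)
  then show ?case by simp
next
  case (insert x F)
  have "top_entropy g p (\<Union>c\<in>insert x F. N c) \<le>
      max (top_entropy g p (N x)) (top_entropy g p (\<Union>c\<in>F. N c))"
    using top_entropy_Un_le[of "N x" "\<Union>c\<in>F. N c"] insert.prems by auto
  also have "\<dots> \<le> max (top_entropy g p (N x)) (Max ((\<lambda>c. top_entropy g p (N c)) ` F))"
    using insert by (intro max.mono) auto
  also have "\<dots> = Max ((\<lambda>c. top_entropy g p (N c)) ` insert x F)"
    using insert by simp
  finally show ?case .
qed

lemma top_entropy_le_local_nbhd:
  assumes K: "compact K" "K \<subseteq> X" "K \<noteq> {}"
    and local: "\<And>x. x \<in> K \<Longrightarrow> \<exists>N. closed_nbhd X x N \<and> P N"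
  obtains N where "P N" "top_entropy g p K \<le> top_entropy g p N"
proof -
  have "\<forall>x\<in>K. \<exists>N e. N \<subseteq> X \<and> P N \<and> e > 0 \<and> X \<inter> ball x e \<subseteq> N"
    using local unfolding closed_nbhd_def by blast
  then obtain N e where N: "\<And>x. x \<in> K \<Longrightarrow> N x \<subseteq> X \<and> P (N x) \<and> e x > 0 \<and> X \<inter> ball x (e x) \<subseteq> N x"
    by metis
  have "K \<subseteq> (\<Union>x\<in>K. ball x (e x))" using N by auto
  then obtain C where C: "C \<subseteq> K" "finite C" "K \<subseteq> (\<Union>x\<in>C. ball x (e x))"
    using compactE_image[OF K(1), of K "\<lambda>x. ball x (e x)"] by auto
  have "C \<noteq> {}" using C(3) K(3) by auto
  have "K \<subseteq> (\<Union>c\<in>C. X \<inter> ball c (e c))" using C(3) K(2) by auto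
  also have "\<dots> \<subseteq> (\<Union>c\<in>C. N c)" using C(1) N by blast
  finally have cover: "K \<subseteq> (\<Union>c\<in>C. N c)" .
  have "Max ((\<lambda>c. top_entropy g p (N c)) ` C) \<in> (\<lambda>c. top_entropy g p (N c)) ` C"
    using \<open>C \<noteq> {}\<close> C(2) by (intro Max_in) auto
  then obtain c where c: "c \<in> C" "Max ((\<lambda>c. top_entropy g p (N c)) ` C) = top_entropy g p (N c)"
    by auto
  have "top_entropy g p K \<le> top_entropy g p (\<Union>c\<in>C. N c)"
    by (rule top_entropy_mono[OF cover]) (use C(1) N in blast)
  also have "\<dots> \<le> top_entropy g p (N c)"
    using top_entropy_UN_le_Max[OF C(2) \<open>C \<noteq> {}\<close>, of N] C(1) N c(2) by auto
  finally show ?thesis using that N c(1) C(1) by blast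
qed

lemma entropy_point_in_compact:
  assumes K: "compact K" "K \<subseteq> X" and pos: "top_entropy g p K > 0"
  shows "K \<inter> entropy_points X g p \<noteq> {}"
proof
  assume none: "K \<inter> entropy_points X g p = {}"
  have local: "\<exists>N. closed_nbhd X x N \<and> top_entropy g p N \<le> 0" if x: "x \<in> K" for x
  proof -
    have "x \<notin> entropy_points X g p" using x none by auto
    then show ?thesis using x K(2) unfolding entropy_points_def by (auto simp: not_less)
  qed
  have "K \<noteq> {}" using pos top_entropy_empty by auto
  then obtain N where "top_entropy g p N \<le> 0" "top_entropy g p K \<le> top_entropy g p N"
    using top_entropy_le_local_nbhd[OF K _ local] by metis
  then show False using pos by simp
qed

lemma full_entropy_point_in_compact:
  assumes K: "compact K" "K \<subseteq> X" and "X \<noteq> {}"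
    and eq: "top_entropy g p K = top_entropy g p X"
  shows "K \<inter> full_entropy_points X g p \<noteq> {}"
proof
  assume none: "K \<inter> full_entropy_points X g p = {}"
  have local: "\<exists>N. closed_nbhd X x N \<and> top_entropy g p N < top_entropy g p X" if x: "x \<in> K" for x
  proof -
    obtain N where N: "closed_nbhd X x N" "top_entropy g p N \<noteq> top_entropy g p X"
      using x none K(2) unfolding full_entropy_points_def by auto
    moreover have "top_entropy g p N \<le> top_entropy g p X"
      using N(1) by (intro top_entropy_mono) (auto simp: closed_nbhd_def)
    ultimately show ?thesis by auto
  qed
  have "K \<noteq> {}"
  proof
    assume "K = {}"
    then have "top_entropy g p X = -\<infinity>" using eq top_entropy_empty by simp
    then show False using top_entropy_nonneg[OF \<open>X \<noteq> {}\<close> order_refl] by simp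
  qed
  then obtain N where "top_entropy g p N < top_entropy g p X" "top_entropy g p K \<le> top_entropy g p N"
    using top_entropy_le_local_nbhd[OF K _ local] by metis
  then show False using eq by simp
qed

end

theorem mainTheorem8:
  fixes X K :: "'a::metric_space set" and g :: "nat \<Rightarrow> 'a \<Rightarrow> 'a" and p :: nat
  assumes "compact X" and "X \<noteq> {}" and "p \<ge> 1"
    and "\<And>i. i < p \<Longrightarrow> continuous_on X (g i)"
    and "\<And>i. i < p \<Longrightarrow> g i ` X \<subseteq> X"
    and "closed K" and "K \<subseteq> X"
  shows "(top_entropy g p K > 0 \<longrightarrow> K \<inter> entropy_points X g p \<noteq> {})
       \<and> (top_entropy g p K = top_entropy g p X \<longrightarrow> K \<inter> full_entropy_points X g p \<noteq> {})"
proof -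
  interpret free_semigroup_action X g p by unfold_locales (use assms in auto)
  have "compact K"
    using compact_Int_closed[OF assms(1,6)] assms(7) by (simp add: Int_absorb1)
  then show ?thesis
    using entropy_point_in_compact full_entropy_point_in_compact assms(2,7) by blast
qed

end
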